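(* Let $(X,d)$ be a compact metric space, $Z=\Delta_f(X)$, and $F:X\rightrightarrows Z$ a correspondence with nonempty values which is non expansive for $d_{KR}$: for all $x,x'\in X$ and $u\in F(x)$ there exists $u'\in F(x')$ with $d_{KR}(u,u')\le d(x,x')$. Then the mixed extension $\hat F$ is $1$-Lipschitz (non expansive) from $(Z,d_{KR})$ to itself: for all $u_1,u_2\in Z$ and $v_1\in\hat F(u_1)$, there exists $v_2\in\hat F(u_2)$ with $d_{KR}(v_1,v_2)\le d_{KR}(u_1,u_2)$.
   Context: $d_{KR}(u,v)=\sup\{\int f\,du-\int f\,dv:\ f:X\to\mathbb R\ 1\text{-Lipschitz}\}$ is the Kantorovich–Rubinstein distance on Borel probabilities on $X$. $\Delta_f(X)$ is the set of finitely supported probabilities on $X$. The mixed extension is $$\hat F(u)=\Big\{\sum_{x}u(x)f(x):\ f:X\to Z,\ f(x)\in\mathrm{conv}\,F(x)\ \forall x\Big\}.$$ *)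

theory Defs
  imports "HOL-Analysis.Analysis"
begin

definition supp :: "('a \<Rightarrow> real) \<Rightarrow> 'a set" where
  "supp u = {x. u x \<noteq> 0}"

definition fsprob :: "'a set \<Rightarrow> ('a \<Rightarrow> real) set" where
  "fsprob X = {u. finite (supp u) \<and> supp u \<subseteq> X \<and> (\<forall>x. 0 \<le> u x) \<and> (\<Sum>x\<in>supp u. u x) = 1}"

definition finteg :: "('a \<Rightarrow> real) \<Rightarrow> ('a \<Rightarrow> real) \<Rightarrow> real" where
  "finteg u f = (\<Sum>x\<in>supp u. u x * f x)"

definition dKR :: "'a::metric_space set \<Rightarrow> ('a \<Rightarrow> real) \<Rightarrow> ('a \<Rightarrow> real) \<Rightarrow> real" where
  "dKR X u v = Sup {finteg u f - finteg v f | f. 1-lipschitz_on X f}"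

definition fconv :: "('a \<Rightarrow> real) set \<Rightarrow> ('a \<Rightarrow> real) set" where
  "fconv S = {(\<lambda>y. \<Sum>i\<in>I. c i * g i y) | (I :: nat set) c g.
     finite I \<and> I \<noteq> {} \<and> (\<forall>i\<in>I. 0 \<le> c i \<and> g i \<in> S) \<and> (\<Sum>i\<in>I. c i) = 1}"

definition mixed_ext :: "'a set \<Rightarrow> ('a \<Rightarrow> ('a \<Rightarrow> real) set) \<Rightarrow> ('a \<Rightarrow> real) \<Rightarrow> ('a \<Rightarrow> real) set" where
  "mixed_ext X F u = {(\<lambda>y. \<Sum>x\<in>supp u. u x * f x y) | f. \<forall>x\<in>X. f x \<in> fconv (F x)}"

end

theory Submission
  imports Defs
begin

(*
  Write v1 \<in> mixed_ext X F u1 as a finite mixture v1 = \<Sum>k w k \<mu>k with \<mu>k \<in> F(xk),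
  where the weights sitting over each point x add up to u1 x. Take an optimal coupling \<pi>
  of u1 and u2 (transport cost \<le> dKR u1 u2), and split the weight w k over the points x'
  of supp u2 in proportion \<pi>(xk, x') / u1(xk). Replacing each \<mu>k by some \<mu>' \<in> F(x') with
  dKR \<mu>k \<mu>' \<le> dist xk x' yields a mixture v2 \<in> mixed_ext X F u2, and joint convexity of
  dKR gives dKR v1 v2 \<le> \<Sum> \<pi>(x,x') dist x x' \<le> dKR u1 u2.
*)

section \<open>Finitely supported functions as an inner product space\<close>

typedef 'k fsf = "{f :: 'k \<Rightarrow> real. finite {x. f x \<noteq> 0}}" morphisms fs Abs_fsf
  by (rule exI[of _ "\<lambda>_. 0"]) simp

setup_lifting type_definition_fsf

instantiation fsf :: (type) real_vector
begin
lift_definition zero_fsf :: "'a fsf" is "\<lambda>_. 0" by simp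
lift_definition plus_fsf :: "'a fsf \<Rightarrow> 'a fsf \<Rightarrow> 'a fsf" is "\<lambda>f g x. f x + g x"
proof -
  fix f g :: "'a \<Rightarrow> real" assume "finite {x. f x \<noteq> 0}" "finite {x. g x \<noteq> 0}"
  then show "finite {x. f x + g x \<noteq> 0}" by (rule finite_subset[rotated, OF finite_UnI]) auto
qed
lift_definition uminus_fsf :: "'a fsf \<Rightarrow> 'a fsf" is "\<lambda>f x. - f x" by simp
lift_definition minus_fsf :: "'a fsf \<Rightarrow> 'a fsf \<Rightarrow> 'a fsf" is "\<lambda>f g x. f x - g x"
proof -
  fix f g :: "'a \<Rightarrow> real" assume "finite {x. f x \<noteq> 0}" "finite {x. g x \<noteq> 0}"
  then show "finite {x. f x - g x \<noteq> 0}" by (rule finite_subset[rotated, OF finite_UnI]) auto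
qed
lift_definition scaleR_fsf :: "real \<Rightarrow> 'a fsf \<Rightarrow> 'a fsf" is "\<lambda>r f x. r * f x"
  by (rule finite_subset[rotated]) auto
instance
  by standard (transfer; auto simp: algebra_simps)+
end

lemma fs_zero [simp]: "fs 0 k = 0" by transfer simp
lemma fs_plus [simp]: "fs (f + g) k = fs f k + fs g k" by transfer simp
lemma fs_scaleR [simp]: "fs (r *\<^sub>R g) k = r * fs g k" by transfer simp
lemma fs_sum: "fs (\<Sum>i\<in>I. g i) k = (\<Sum>i\<in>I. fs (g i) k)"
  by (induction I rule: infinite_finite_induct) auto

definition fsupp :: "'a fsf \<Rightarrow> 'a set" where
  "fsupp f = {x. fs f x \<noteq> 0}"

lemma finite_fsupp [simp]: "finite (fsupp f)"
  using fs[of f] by (simp add: fsupp_def)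

definition fsf_inner :: "'a fsf \<Rightarrow> 'a fsf \<Rightarrow> real" where
  "fsf_inner f g = (\<Sum>k\<in>fsupp f. fs f k * fs g k)"

lemma fsf_inner_superset:
  assumes "finite A" "fsupp f \<subseteq> A"
  shows "fsf_inner f g = (\<Sum>k\<in>A. fs f k * fs g k)"
  unfolding fsf_inner_def
  by (rule sum.mono_neutral_left) (use assms in \<open>auto simp: fsupp_def\<close>)

instantiation fsf :: (type) real_inner
begin
definition inner_fsf :: "'a fsf \<Rightarrow> 'a fsf \<Rightarrow> real" where "inner_fsf = fsf_inner"
definition norm_fsf :: "'a fsf \<Rightarrow> real" where "norm_fsf f = sqrt (fsf_inner f f)"
definition sgn_fsf :: "'a fsf \<Rightarrow> 'a fsf" where "sgn_fsf f = f /\<^sub>R norm f"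
definition dist_fsf :: "'a fsf \<Rightarrow> 'a fsf \<Rightarrow> real" where "dist_fsf f g = norm (f - g)"
definition uniformity_fsf :: "('a fsf \<times> 'a fsf) filter" where
  "uniformity_fsf = (INF e\<in>{0 <..}. principal {(x, y). dist x y < e})"
definition open_fsf :: "'a fsf set \<Rightarrow> bool" where
  "open_fsf U = (\<forall>x\<in>U. eventually (\<lambda>(x', y). x' = x \<longrightarrow> y \<in> U) uniformity)"
instance
proof
  fix x y z :: "'a fsf" and r :: real
  have sym: "fsf_inner f g = fsf_inner g f" for f g :: "'a fsf"
    using fsf_inner_superset[of "fsupp f \<union> fsupp g" f g] fsf_inner_superset[of "fsupp f \<union> fsupp g" g f]
    by (simp add: mult.commute)
  then show "inner x y = inner y x" by (simp add: inner_fsf_def)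
  have A: "finite (fsupp x \<union> fsupp y \<union> fsupp z)" by simp
  have B: "fsupp (x + y) \<subseteq> fsupp x \<union> fsupp y \<union> fsupp z" by (auto simp: fsupp_def)
  show "inner (x + y) z = inner x z + inner y z" unfolding inner_fsf_def
    by (subst (1 2 3) fsf_inner_superset[OF A]) (use B in \<open>auto simp: algebra_simps sum.distrib\<close>)
  have C: "fsupp (r *\<^sub>R x) \<subseteq> fsupp x" by (auto simp: fsupp_def)
  show "inner (r *\<^sub>R x) y = r * inner x y" unfolding inner_fsf_def
    by (subst (1 2) fsf_inner_superset[of "fsupp x"])
      (use C in \<open>auto simp: sum_distrib_left algebra_simps\<close>)
  show "0 \<le> inner x x" unfolding inner_fsf_def fsf_inner_def by (auto intro: sum_nonneg)
  show "inner x x = 0 \<longleftrightarrow> x = 0"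
  proof
    assume "inner x x = 0"
    then have "\<forall>k\<in>fsupp x. fs x k * fs x k = 0"
      unfolding inner_fsf_def fsf_inner_def by (subst (asm) sum_nonneg_eq_0_iff) auto
    then have "\<forall>k. fs x k = 0" by (auto simp: fsupp_def)
    then show "x = 0" by transfer auto
  qed (simp add: inner_fsf_def fsf_inner_def fsupp_def)
  show "norm x = sqrt (inner x x)" by (simp add: norm_fsf_def inner_fsf_def)
qed (simp_all add: sgn_fsf_def dist_fsf_def uniformity_fsf_def open_fsf_def)
end

lift_definition unit_fsf :: "'a \<Rightarrow> 'a fsf" is "\<lambda>k j. if j = k then 1 else 0"
  by simp

lemma fs_unit_fsf [simp]: "fs (unit_fsf k) j = (if j = k then 1 else 0)"
  by transfer simp

lemma inner_unit_fsf [simp]: "inner a (unit_fsf k) = fs a k"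
proof -
  have "inner (unit_fsf k) a = (\<Sum>j\<in>{k}. fs (unit_fsf k) j * fs a j)"
    unfolding inner_fsf_def by (rule fsf_inner_superset) (auto simp: fsupp_def)
  then show ?thesis by (simp add: inner_commute)
qed

text \<open>Strict separation of a point from a nonempty compact convex set in an arbitrary real
  inner product space (the library version needs the Heine-Borel property). The normal is
  the difference between the point and its nearest point in the set.\<close>
lemma compact_convex_strict_separation:
  fixes z :: "'a::real_inner"
  assumes "convex S" "compact S" "S \<noteq> {}" "z \<notin> S"
  shows "\<exists>a b. inner a z < b \<and> (\<forall>x\<in>S. b < inner a x)"
proof -
  have "continuous_on S (dist z)" by (intro continuous_intros)
  then obtain y where "y \<in> S" and nearest: "\<And>x. x \<in> S \<Longrightarrow> dist z y \<le> dist z x"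
    using continuous_attains_inf[OF assms(2,3), of "dist z"] by blast
  have obtuse: "inner (z - y) (x - y) \<le> 0" if "x \<in> S" for x
  proof (rule ccontr)
    assume "\<not> ?thesis"
    then obtain u where "0 < u" "u \<le> 1" "dist (y + u *\<^sub>R (x - y)) z < dist y z"
      using closer_point_lemma by (metis not_le)
    then show False
      using nearest[of "y + u *\<^sub>R (x - y)"] convexD_alt[OF \<open>convex S\<close>] \<open>x \<in> S\<close> \<open>y \<in> S\<close>
      by (auto simp: dist_commute algebra_simps)
  qed
  have "0 < inner (y - z) (y - z)"
    using \<open>y \<in> S\<close> \<open>z \<notin> S\<close> by auto
  show ?thesis
  proof (intro exI conjI ballI)
    show "inner (y - z) z < inner (y - z) z + (norm (y - z))\<^sup>2 / 2"
      using \<open>y \<in> S\<close> \<open>z \<notin> S\<close> by auto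
    fix x assume "x \<in> S"
    show "inner (y - z) z + (norm (y - z))\<^sup>2 / 2 < inner (y - z) x"
      using obtuse[OF \<open>x \<in> S\<close>] \<open>0 < inner (y - z) (y - z)\<close>
      by (force simp: field_simps power2_norm_eq_inner inner_commute inner_diff)
  qed
qed


section \<open>Finite Kantorovich duality\<close>

lemma fsprob_facts:
  assumes "u \<in> fsprob X"
  shows "finite (supp u)" "supp u \<subseteq> X" "\<And>x. 0 \<le> u x" "sum u (supp u) = 1"
    "supp u \<noteq> {}" "\<And>x. x \<in> supp u \<Longrightarrow> 0 < u x"
  using assms unfolding fsprob_def supp_def by (auto simp: order_le_less)

definition coupling :: "('a \<Rightarrow> real) \<Rightarrow> ('a \<Rightarrow> real) \<Rightarrow> ('a \<Rightarrow> 'a \<Rightarrow> real) \<Rightarrow> bool" where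
  "coupling u1 u2 \<pi> \<longleftrightarrow> (\<forall>x y. 0 \<le> \<pi> x y)
     \<and> (\<forall>x\<in>supp u1. (\<Sum>y\<in>supp u2. \<pi> x y) = u1 x)
     \<and> (\<forall>y\<in>supp u2. (\<Sum>x\<in>supp u1. \<pi> x y) = u2 y)"

definition transport_cost ::
  "('a::metric_space \<Rightarrow> real) \<Rightarrow> ('a \<Rightarrow> real) \<Rightarrow> ('a \<Rightarrow> 'a \<Rightarrow> real) \<Rightarrow> real" where
  "transport_cost u1 u2 \<pi> = (\<Sum>x\<in>supp u1. \<Sum>y\<in>supp u2. \<pi> x y * dist x y)"

lemma coupling_average:
  assumes "coupling u1 u2 \<pi>"
  shows "(\<Sum>x\<in>supp u1. \<Sum>y\<in>supp u2. \<pi> x y * (\<alpha> x + \<beta> y + \<gamma> * dist x y))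
    = (\<Sum>x\<in>supp u1. u1 x * \<alpha> x) + (\<Sum>y\<in>supp u2. u2 y * \<beta> y) + \<gamma> * transport_cost u1 u2 \<pi>"
proof -
  have "(\<Sum>x\<in>supp u1. \<Sum>y\<in>supp u2. \<pi> x y * \<alpha> x) = (\<Sum>x\<in>supp u1. u1 x * \<alpha> x)"
    using assms by (simp add: coupling_def flip: sum_distrib_right)
  moreover have "(\<Sum>x\<in>supp u1. \<Sum>y\<in>supp u2. \<pi> x y * \<beta> y) = (\<Sum>y\<in>supp u2. u2 y * \<beta> y)"
    using assms by (subst sum.swap) (simp add: coupling_def flip: sum_distrib_right)
  ultimately show ?thesis
    by (simp add: transport_cost_def distrib_left sum.distrib sum_distrib_left mult.left_commute)
qed

lemma product_coupling:
  assumes "u1 \<in> fsprob X" "u2 \<in> fsprob X"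
  shows "coupling u1 u2 (\<lambda>x y. u1 x * u2 y)"
  using fsprob_facts[OF assms(1)] fsprob_facts[OF assms(2)]
  by (simp add: coupling_def flip: sum_distrib_left sum_distrib_right)

text \<open>Encoding of transport plans as vectors: moving unit mass from x to y is recorded by
  a unit entry at the source x, one at the target y, and the cost in a separate coordinate.
  Couplings of cost D correspond to convex combinations of these vectors that hit
  \<open>target_vec u1 u2 D\<close>.\<close>
definition plan_vec :: "'a::metric_space \<Rightarrow> 'a \<Rightarrow> ('a + 'a) option fsf" where
  "plan_vec x y = unit_fsf (Some (Inl x)) + unit_fsf (Some (Inr y)) + dist x y *\<^sub>R unit_fsf None"

definition target_vec :: "('a \<Rightarrow> real) \<Rightarrow> ('a \<Rightarrow> real) \<Rightarrow> real \<Rightarrow> ('a + 'a) option fsf" where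
  "target_vec u1 u2 D = (\<Sum>x\<in>supp u1. u1 x *\<^sub>R unit_fsf (Some (Inl x)))
     + (\<Sum>y\<in>supp u2. u2 y *\<^sub>R unit_fsf (Some (Inr y))) + D *\<^sub>R unit_fsf None"

lemma fs_plan_vec:
  "fs (plan_vec x y) (Some (Inl x')) = (if x' = x then 1 else 0)"
  "fs (plan_vec x y) (Some (Inr y')) = (if y' = y then 1 else 0)"
  "fs (plan_vec x y) None = dist x y"
  by (simp_all add: plan_vec_def)

lemma fs_target_vec:
  assumes "finite (supp u1)" "finite (supp u2)"
  shows "x \<in> supp u1 \<Longrightarrow> fs (target_vec u1 u2 D) (Some (Inl x)) = u1 x"
    and "y \<in> supp u2 \<Longrightarrow> fs (target_vec u1 u2 D) (Some (Inr y)) = u2 y"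
    and "fs (target_vec u1 u2 D) None = D"
  using assms by (simp_all add: target_vec_def fs_sum if_distrib cong: if_cong)

lemma inj_plan_vec: "inj (case_prod plan_vec)"
proof (rule injI, clarify)
  fix x y x' y' assume "plan_vec x y = plan_vec x' y'"
  then have "fs (plan_vec x y) (Some (Inl x)) = fs (plan_vec x' y') (Some (Inl x))"
    "fs (plan_vec x y) (Some (Inr y)) = fs (plan_vec x' y') (Some (Inr y))" by auto
  then show "x = x' \<and> y = y'" by (auto simp: fs_plan_vec split: if_splits)
qed

lemma coupling_from_hull:
  assumes fin: "finite (supp u1)" "finite (supp u2)"
    and hull: "target_vec u1 u2 D \<in> convex hull (case_prod plan_vec ` (supp u1 \<times> supp u2))"
  shows "\<exists>\<pi>. coupling u1 u2 \<pi> \<and> transport_cost u1 u2 \<pi> \<le> D"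
proof -
  let ?S = "supp u1 \<times> supp u2"
  obtain w where w0: "\<forall>p\<in>case_prod plan_vec ` ?S. 0 \<le> w p"
    and wz: "(\<Sum>p\<in>case_prod plan_vec ` ?S. w p *\<^sub>R p) = target_vec u1 u2 D"
    using hull convex_hull_finite[of "case_prod plan_vec ` ?S"] fin by auto
  have inj: "inj_on (case_prod plan_vec) ?S"
    using inj_plan_vec by (rule inj_on_subset) simp
  define \<pi> where "\<pi> x y = (if (x, y) \<in> ?S then w (plan_vec x y) else 0)" for x y
  have plan: "target_vec u1 u2 D = (\<Sum>x\<in>supp u1. \<Sum>y\<in>supp u2. \<pi> x y *\<^sub>R plan_vec x y)"
    unfolding wz[symmetric] sum.reindex[OF inj] sum.cartesian_product
    by (rule sum.cong) (auto simp: \<pi>_def)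
  have "coupling u1 u2 \<pi>"
    unfolding coupling_def
  proof (intro conjI allI ballI)
    fix x y show "0 \<le> \<pi> x y" using w0 by (auto simp: \<pi>_def)
  next
    fix x assume x: "x \<in> supp u1"
    have "u1 x = (\<Sum>x'\<in>supp u1. \<Sum>y\<in>supp u2. \<pi> x' y * (if x = x' then 1 else 0))"
      using arg_cong[OF plan, of "\<lambda>v. fs v (Some (Inl x))"] x fin
      by (simp add: fs_target_vec fs_sum fs_plan_vec)
    also have "\<dots> = (\<Sum>x'\<in>supp u1. if x = x' then (\<Sum>y\<in>supp u2. \<pi> x' y) else 0)"
      by (rule sum.cong) auto
    finally show "(\<Sum>y\<in>supp u2. \<pi> x y) = u1 x" using x fin by simp
  next
    fix y assume y: "y \<in> supp u2"
    have "u2 y = (\<Sum>x\<in>supp u1. \<Sum>y'\<in>supp u2. \<pi> x y' * (if y = y' then 1 else 0))"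
      using arg_cong[OF plan, of "\<lambda>v. fs v (Some (Inr y))"] y fin
      by (simp add: fs_target_vec fs_sum fs_plan_vec)
    then show "(\<Sum>x\<in>supp u1. \<pi> x y) = u2 y"
      using y fin by (simp add: if_distrib cong: if_cong)
  qed
  moreover have "transport_cost u1 u2 \<pi> = D"
    using arg_cong[OF plan, of "\<lambda>v. fs v None"] fin
    by (simp add: fs_target_vec fs_sum fs_plan_vec transport_cost_def)
  ultimately show ?thesis by auto
qed

text \<open>If no coupling is cheaper than D, separating \<open>target_vec u1 u2 D\<close> from the hull of
  the plan vectors yields a dual certificate: potentials \<alpha>, \<beta> and a weight \<gamma> on the
  distance such that \<alpha> x + \<beta> y + \<gamma> dist x y exceeds b on all pairs, while the
  corresponding average at cost D lies below b.\<close>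
lemma dual_certificate:
  assumes u1: "u1 \<in> fsprob X" and u2: "u2 \<in> fsprob X"
    and no_coupling: "\<not> (\<exists>\<pi>. coupling u1 u2 \<pi> \<and> transport_cost u1 u2 \<pi> \<le> D)"
  shows "\<exists>\<alpha> \<beta> \<gamma> b. (\<forall>x\<in>supp u1. \<forall>y\<in>supp u2. b < \<alpha> x + \<beta> y + \<gamma> * dist x y)
    \<and> (\<Sum>x\<in>supp u1. u1 x * \<alpha> x) + (\<Sum>y\<in>supp u2. u2 y * \<beta> y) + D * \<gamma> < b"
proof -
  note f1 = fsprob_facts[OF u1] and f2 = fsprob_facts[OF u2]
  let ?P = "case_prod plan_vec ` (supp u1 \<times> supp u2)"
  have "finite ?P" using f1(1) f2(1) by auto
  moreover have "convex hull ?P \<noteq> {}" using f1(5) f2(5) by (auto simp: convex_hull_eq_empty)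
  moreover have "target_vec u1 u2 D \<notin> convex hull ?P"
    using coupling_from_hull[OF f1(1) f2(1)] no_coupling by blast
  ultimately obtain a b where below: "inner a (target_vec u1 u2 D) < b"
    and above: "\<forall>p\<in>convex hull ?P. b < inner a p"
    using compact_convex_strict_separation[OF convex_convex_hull finite_imp_compact_convex_hull]
    by blast
  define \<alpha> where "\<alpha> x = fs a (Some (Inl x))" for x
  define \<beta> where "\<beta> y = fs a (Some (Inr y))" for y
  define \<gamma> where "\<gamma> = fs a None"
  have "inner a (plan_vec x y) = \<alpha> x + \<beta> y + \<gamma> * dist x y" for x y
    by (simp add: plan_vec_def inner_add_right \<alpha>_def \<beta>_def \<gamma>_def mult.commute)
  moreover have "plan_vec x y \<in> convex hull ?P" if "x \<in> supp u1" "y \<in> supp u2" for x y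
    using that hull_subset[of ?P convex] by blast
  ultimately have "\<forall>x\<in>supp u1. \<forall>y\<in>supp u2. b < \<alpha> x + \<beta> y + \<gamma> * dist x y"
    using above by metis
  moreover have "inner a (target_vec u1 u2 D)
      = (\<Sum>x\<in>supp u1. u1 x * \<alpha> x) + (\<Sum>y\<in>supp u2. u2 y * \<beta> y) + D * \<gamma>"
    by (simp add: target_vec_def inner_add_right inner_sum_right \<alpha>_def \<beta>_def \<gamma>_def mult.commute)
  ultimately show ?thesis using below by auto
qed

text \<open>Distance to a finite set, shifted by constants: an inf-convolution, hence 1-Lipschitz.\<close>
lemma lipschitz_Min_dist:
  assumes "finite S" "S \<noteq> {}"
  shows "1-lipschitz_on T (\<lambda>w. Min ((\<lambda>y. c y + dist w y) ` S))"
proof -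
  define h where "h w = Min ((\<lambda>y. c y + dist w y) ` S)" for w
  have step: "h w \<le> h w' + dist w w'" for w w'
  proof -
    have "h w' \<in> (\<lambda>y. c y + dist w' y) ` S"
      unfolding h_def using assms by (intro Min_in) auto
    then obtain y where "y \<in> S" "h w' = c y + dist w' y" by blast
    moreover have "h w \<le> c y + dist w y"
      using \<open>y \<in> S\<close> assms by (auto simp: h_def intro: Min_le)
    ultimately show ?thesis using dist_triangle[of w y w'] by simp
  qed
  show ?thesis
    unfolding h_def[symmetric]
  proof (rule lipschitz_onI)
    fix x y show "dist (h x) (h y) \<le> 1 * dist x y"
      using step[of x y] step[of y x] by (simp add: dist_real_def dist_commute abs_le_iff)
  qed simp
qed

text \<open>A dual certificate with \<gamma> > 0 gives a 1-Lipschitz function, an inf-convolution of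
  the potential \<beta>, whose integrals against u1 and u2 differ by at least the certificate's
  gap divided by \<gamma>.\<close>
lemma lipschitz_from_certificate:
  assumes u1: "u1 \<in> fsprob X" and u2: "u2 \<in> fsprob X" and "0 < \<gamma>"
    and cert: "\<forall>x\<in>supp u1. \<forall>y\<in>supp u2. b < \<alpha> x + \<beta> y + \<gamma> * dist x y"
  shows "\<exists>h. 1-lipschitz_on X h \<and>
    (b - (\<Sum>x\<in>supp u1. u1 x * \<alpha> x) - (\<Sum>y\<in>supp u2. u2 y * \<beta> y)) / \<gamma> \<le> finteg u1 h - finteg u2 h"
proof -
  note f1 = fsprob_facts[OF u1] and f2 = fsprob_facts[OF u2]
  define h where "h w = Min ((\<lambda>y. (\<beta> y - b) / \<gamma> + dist w y) ` supp u2)" for w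
  have lip: "1-lipschitz_on X h"
    unfolding h_def by (rule lipschitz_Min_dist[OF f2(1,5)])
  have lower: "- \<alpha> x / \<gamma> \<le> h x" if "x \<in> supp u1" for x
    unfolding h_def
  proof (rule Min.boundedI)
    fix t assume "t \<in> (\<lambda>y. (\<beta> y - b) / \<gamma> + dist x y) ` supp u2"
    then obtain y where "y \<in> supp u2" "t = (\<beta> y - b) / \<gamma> + dist x y" by auto
    moreover have "- \<alpha> x < \<beta> y - b + \<gamma> * dist x y" using cert that \<open>y \<in> supp u2\<close> by force
    ultimately show "- \<alpha> x / \<gamma> \<le> t" using \<open>0 < \<gamma>\<close> by (simp add: field_simps)
  qed (use f2(1,5) in auto)
  have upper: "h y \<le> (\<beta> y - b) / \<gamma>" if "y \<in> supp u2" for y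
    unfolding h_def using that f2(1) by (intro Min_le) force+
  have "(\<Sum>x\<in>supp u1. u1 x * (- \<alpha> x / \<gamma>)) \<le> finteg u1 h"
    unfolding finteg_def using lower f1(3) by (intro sum_mono mult_left_mono) auto
  moreover have "finteg u2 h \<le> (\<Sum>y\<in>supp u2. u2 y * ((\<beta> y - b) / \<gamma>))"
    unfolding finteg_def using upper f2(3) by (intro sum_mono mult_left_mono) auto
  moreover have "(\<Sum>y\<in>supp u2. u2 y * ((\<beta> y - b) / \<gamma>))
      = (\<Sum>y\<in>supp u2. u2 y * \<beta> y - b * u2 y) / \<gamma>"
    by (simp add: sum_divide_distrib algebra_simps)
  moreover have "\<dots> = ((\<Sum>y\<in>supp u2. u2 y * \<beta> y) - b) / \<gamma>"
    using f2(4) by (simp add: sum_subtractf flip: sum_distrib_left)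
  moreover have "(\<Sum>x\<in>supp u1. u1 x * (- \<alpha> x / \<gamma>)) = - (\<Sum>x\<in>supp u1. u1 x * \<alpha> x) / \<gamma>"
    by (simp add: sum_divide_distrib sum_negf)
  ultimately show ?thesis
    using lip by (intro exI[of _ h]) (auto simp: diff_divide_distrib)
qed

text \<open>The product
  coupling forces the certificate's weight \<gamma> to be positive, and then the certificate
  produces a Lipschitz function violating the hypothesis.\<close>
theorem kantorovich_duality:
  assumes u1: "u1 \<in> fsprob X" and u2: "u2 \<in> fsprob X"
    and bound: "\<And>h. 1-lipschitz_on X h \<Longrightarrow> finteg u1 h - finteg u2 h \<le> D"
  shows "\<exists>\<pi>. coupling u1 u2 \<pi> \<and> transport_cost u1 u2 \<pi> \<le> D"
proof (rule ccontr)
  assume no_coupling: "\<not> ?thesis"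
  then obtain \<alpha> \<beta> \<gamma> b where
    cert: "\<forall>x\<in>supp u1. \<forall>y\<in>supp u2. b < \<alpha> x + \<beta> y + \<gamma> * dist x y"
    and low: "(\<Sum>x\<in>supp u1. u1 x * \<alpha> x) + (\<Sum>y\<in>supp u2. u2 y * \<beta> y) + D * \<gamma> < b"
    using dual_certificate[OF u1 u2] by blast
  note f1 = fsprob_facts[OF u1] and f2 = fsprob_facts[OF u2]
  define \<pi>0 where "\<pi>0 x y = u1 x * u2 y" for x y
  have prod: "coupling u1 u2 \<pi>0"
    unfolding \<pi>0_def by (rule product_coupling[OF u1 u2])
  then have "D < transport_cost u1 u2 \<pi>0" using no_coupling by auto
  have "(\<Sum>x\<in>supp u1. \<Sum>y\<in>supp u2. \<pi>0 x y * b)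
      < (\<Sum>x\<in>supp u1. \<Sum>y\<in>supp u2. \<pi>0 x y * (\<alpha> x + \<beta> y + \<gamma> * dist x y))"
    using f1 f2 cert by (intro sum_strict_mono mult_strict_left_mono) (auto simp: \<pi>0_def)
  moreover have "(\<Sum>x\<in>supp u1. \<Sum>y\<in>supp u2. \<pi>0 x y * b) = b"
    using f1(4) f2(4) by (simp add: \<pi>0_def flip: sum_distrib_left sum_distrib_right)
  ultimately have "b < (\<Sum>x\<in>supp u1. u1 x * \<alpha> x) + (\<Sum>y\<in>supp u2. u2 y * \<beta> y)
      + \<gamma> * transport_cost u1 u2 \<pi>0"
    unfolding coupling_average[OF prod] by simp
  with low have "\<gamma> * D < \<gamma> * transport_cost u1 u2 \<pi>0"
    by (simp add: mult.commute)
  with \<open>D < transport_cost u1 u2 \<pi>0\<close> have "0 < \<gamma>"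
    by (auto simp: mult_less_cancel_left)
  then obtain h where "1-lipschitz_on X h" and
    "(b - (\<Sum>x\<in>supp u1. u1 x * \<alpha> x) - (\<Sum>y\<in>supp u2. u2 y * \<beta> y)) / \<gamma>
      \<le> finteg u1 h - finteg u2 h"
    using lipschitz_from_certificate[OF u1 u2 _ cert] by blast
  moreover have "D < (b - (\<Sum>x\<in>supp u1. u1 x * \<alpha> x) - (\<Sum>y\<in>supp u2. u2 y * \<beta> y)) / \<gamma>"
    using low \<open>0 < \<gamma>\<close> by (simp add: pos_less_divide_eq mult.commute)
  ultimately show False using bound by fastforce
qed


lemma finteg_superset:
  assumes "finite A" "supp u \<subseteq> A"
  shows "finteg u f = (\<Sum>x\<in>A. u x * f x)"
  unfolding finteg_def by (rule sum.mono_neutral_left) (use assms in \<open>auto simp: supp_def\<close>)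

lemma finteg_mixture:
  assumes "finite K" "\<forall>k\<in>K. finite (supp (\<mu> k))"
  shows "finteg (\<lambda>y. \<Sum>k\<in>K. w k * \<mu> k y) f = (\<Sum>k\<in>K. w k * finteg (\<mu> k) f)"
proof -
  define A where "A = (\<Union>k\<in>K. supp (\<mu> k))"
  have "finite A" using assms by (simp add: A_def)
  have "supp (\<lambda>y. \<Sum>k\<in>K. w k * \<mu> k y) \<subseteq> A"
    by (auto simp: supp_def A_def intro: ccontr dest: sum.neutral[rotated])
  then have "finteg (\<lambda>y. \<Sum>k\<in>K. w k * \<mu> k y) f = (\<Sum>y\<in>A. (\<Sum>k\<in>K. w k * \<mu> k y) * f y)"
    by (rule finteg_superset[OF \<open>finite A\<close>])
  also have "\<dots> = (\<Sum>k\<in>K. w k * (\<Sum>y\<in>A. \<mu> k y * f y))"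
    by (simp add: sum_distrib_right sum_distrib_left mult.assoc sum.swap[of _ A])
  also have "\<dots> = (\<Sum>k\<in>K. w k * finteg (\<mu> k) f)"
    by (rule sum.cong[OF refl], subst finteg_superset[OF \<open>finite A\<close>]) (auto simp: A_def)
  finally show ?thesis .
qed

text \<open>On a compact (hence bounded) space the supremum defining dKR is bounded above, so each
  1-Lipschitz function gives a lower bound for dKR.\<close>
lemma dKR_upper:
  assumes "compact X" "u \<in> fsprob X" "v \<in> fsprob X" "1-lipschitz_on X f"
  shows "finteg u f - finteg v f \<le> dKR X u v"
proof -
  obtain B where B: "\<forall>x\<in>X. \<forall>y\<in>X. dist x y \<le> B"
    using compact_imp_bounded[OF assms(1)] bounded_two_points by blast
  note fu = fsprob_facts[OF assms(2)] and fv = fsprob_facts[OF assms(3)]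
  have "finteg u g - finteg v g \<le> B" if "1-lipschitz_on X g" for g
  proof -
    have "finteg u g - finteg v g
        = (\<Sum>x\<in>supp u. \<Sum>y\<in>supp v. u x * v y * (g x + (- 1) * g y + 0 * dist x y))"
      using coupling_average[OF product_coupling[OF assms(2,3)], of g "\<lambda>y. - g y" 0] fu(4) fv(4)
      by (simp add: finteg_def sum_negf)
    also have "\<dots> \<le> (\<Sum>x\<in>supp u. \<Sum>y\<in>supp v. u x * v y * B)"
    proof (intro sum_mono mult_left_mono)
      fix x y assume "x \<in> supp u" "y \<in> supp v"
      then have "x \<in> X" "y \<in> X" using fu(2) fv(2) by auto
      then have "g x - g y \<le> dist x y"
        using lipschitz_onD[OF that, of x y] by (simp add: dist_real_def)
      then show "g x + (- 1) * g y + 0 * dist x y \<le> B" using B \<open>x \<in> X\<close> \<open>y \<in> X\<close> by force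
      show "0 \<le> u x * v y" using fu(3) fv(3) by simp
    qed
    also have "\<dots> = B" using fu(4) fv(4)
      by (simp add: sum_distrib_right[symmetric] sum_distrib_left[symmetric])
    finally show ?thesis .
  qed
  then show ?thesis unfolding dKR_def
    by (intro cSup_upper bdd_aboveI) (use assms(4) in auto)
qed

lemma dKR_le:
  assumes "\<And>f. 1-lipschitz_on X f \<Longrightarrow> finteg u f - finteg v f \<le> D"
  shows "dKR X u v \<le> D"
  unfolding dKR_def
proof (rule cSup_least)
  have "1-lipschitz_on X (\<lambda>_. 0::real)" by (rule lipschitz_onI) auto
  then show "{finteg u f - finteg v f |f. 1-lipschitz_on X f} \<noteq> {}" by blast
qed (use assms in auto)

corollary optimal_coupling:
  assumes "compact X" "u1 \<in> fsprob X" "u2 \<in> fsprob X"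
  shows "\<exists>\<pi>. coupling u1 u2 \<pi> \<and> transport_cost u1 u2 \<pi> \<le> dKR X u1 u2"
  using assms by (intro kantorovich_duality dKR_upper)

lemma dKR_mixture_le:
  assumes "compact X" "finite K"
    and "\<forall>k\<in>K. 0 \<le> w k \<and> \<mu> k \<in> fsprob X \<and> \<mu>' k \<in> fsprob X"
  shows "dKR X (\<lambda>y. \<Sum>k\<in>K. w k * \<mu> k y) (\<lambda>y. \<Sum>k\<in>K. w k * \<mu>' k y)
    \<le> (\<Sum>k\<in>K. w k * dKR X (\<mu> k) (\<mu>' k))"
proof (rule dKR_le)
  fix f :: "'a \<Rightarrow> real" assume f: "1-lipschitz_on X f"
  have "\<forall>k\<in>K. finite (supp (\<mu> k))" "\<forall>k\<in>K. finite (supp (\<mu>' k))"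
    using assms(3) fsprob_facts(1) by blast+
  then have "finteg (\<lambda>y. \<Sum>k\<in>K. w k * \<mu> k y) f - finteg (\<lambda>y. \<Sum>k\<in>K. w k * \<mu>' k y) f
      = (\<Sum>k\<in>K. w k * (finteg (\<mu> k) f - finteg (\<mu>' k) f))"
    by (simp add: finteg_mixture[OF assms(2)] right_diff_distrib sum_subtractf)
  also have "\<dots> \<le> (\<Sum>k\<in>K. w k * dKR X (\<mu> k) (\<mu>' k))"
    using assms f by (intro sum_mono mult_left_mono dKR_upper) auto
  finally show "finteg (\<lambda>y. \<Sum>k\<in>K. w k * \<mu> k y) f - finteg (\<lambda>y. \<Sum>k\<in>K. w k * \<mu>' k y) f
      \<le> (\<Sum>k\<in>K. w k * dKR X (\<mu> k) (\<mu>' k))" .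
qed

text \<open>fconv S is closed under convex combinations indexed by an arbitrary finite set
  (its definition uses index sets of natural numbers).\<close>
lemma fconv_comb:
  fixes J :: "'b set" and h :: "'b \<Rightarrow> ('a \<Rightarrow> real)"
  assumes fin: "finite J" and jw: "\<forall>j\<in>J. 0 \<le> w j \<and> h j \<in> S" and s1: "sum w J = 1"
  shows "(\<lambda>y. \<Sum>j\<in>J. w j * h j y) \<in> fconv S"
proof -
  define T where "T = h ` J"
  define W where "W t = sum w {j \<in> J. h j = t}" for t
  have "(\<Sum>j\<in>J. w j * h j y) = (\<Sum>t\<in>T. W t * t y)" for y
  proof -
    have "(\<Sum>j\<in>J. w j * h j y) = (\<Sum>t\<in>T. \<Sum>j\<in>{j\<in>J. h j = t}. w j * h j y)"
      unfolding T_def by (rule sum.image_gen[OF fin])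
    also have "\<dots> = (\<Sum>t\<in>T. W t * t y)"
      unfolding W_def sum_distrib_right by (intro sum.cong) auto
    finally show ?thesis .
  qed
  moreover have "finite T" "T \<noteq> {}" using fin s1 by (auto simp: T_def)
  then obtain e where e: "bij_betw e {0..<card T} T" using ex_bij_betw_nat_finite by blast
  then have "(\<Sum>t\<in>T. W t * t y) = (\<Sum>i\<in>{0..<card T}. W (e i) * e i y)" for y
    by (rule sum.reindex_bij_betw[symmetric])
  moreover have "(\<lambda>y. \<Sum>i\<in>{0..<card T}. W (e i) * e i y) \<in> fconv S"
    unfolding fconv_def
  proof (intro CollectI exI conjI)
    show "{0..<card T} \<noteq> {}" using \<open>finite T\<close> \<open>T \<noteq> {}\<close> by simp
    show "\<forall>i\<in>{0..<card T}. 0 \<le> W (e i) \<and> e i \<in> S"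
      using e jw by (force simp: bij_betw_def W_def T_def intro: sum_nonneg)
    have "sum W T = 1"
      using s1 unfolding W_def T_def by (simp add: sum.image_gen[OF fin, symmetric])
    then show "(\<Sum>i\<in>{0..<card T}. W (e i)) = 1" using sum.reindex_bij_betw[OF e, of W] by simp
  qed auto
  ultimately show ?thesis by simp
qed

lemma fconv_single: "g \<in> S \<Longrightarrow> g \<in> fconv S"
  using fconv_comb[of "{()}" "\<lambda>_. 1" "\<lambda>_. g" S] by simp


section \<open>Mixtures splitting a measure\<close>

definition splits :: "('a \<Rightarrow> real) \<Rightarrow> 'i set \<Rightarrow> ('i \<Rightarrow> 'a) \<Rightarrow> ('i \<Rightarrow> real) \<Rightarrow> bool" where
  "splits u K loc w \<longleftrightarrow> finite K \<and> (\<forall>k\<in>K. 0 \<le> w k \<and> loc k \<in> supp u)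
     \<and> (\<forall>x\<in>supp u. (\<Sum>k\<in>{k\<in>K. loc k = x}. w k) = u x)"

lemma splits_group:
  assumes "splits u K loc w" "finite (supp u)"
  shows "(\<Sum>k\<in>K. h k) = (\<Sum>x\<in>supp u. \<Sum>k\<in>{k\<in>K. loc k = x}. h k)"
  using assms by (intro sum.group[symmetric]) (auto simp: splits_def)

lemma splits_sum:
  assumes "splits u K loc w" "finite (supp u)"
  shows "(\<Sum>k\<in>K. w k * G (loc k)) = (\<Sum>x\<in>supp u. u x * G x)"
proof -
  have "(\<Sum>k\<in>{k\<in>K. loc k = x}. w k * G (loc k)) = u x * G x" if "x \<in> supp u" for x
    using assms(1) that by (simp add: splits_def sum_distrib_right[symmetric])
  then show ?thesis by (simp add: splits_group[OF assms])
qed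

lemma mixed_ext_splits:
  assumes u: "u \<in> fsprob X" and v: "v \<in> mixed_ext X F u"
  obtains K :: "('a \<times> nat) set" and w \<mu>
  where "splits u K fst w" "\<forall>k\<in>K. \<mu> k \<in> F (fst k)" "v = (\<lambda>y. \<Sum>k\<in>K. w k * \<mu> k y)"
proof -
  note fu = fsprob_facts[OF u]
  obtain f where v_eq: "v = (\<lambda>y. \<Sum>x\<in>supp u. u x * f x y)" and f: "\<forall>x\<in>X. f x \<in> fconv (F x)"
    using v unfolding mixed_ext_def by blast
  define P where "P x I c g \<longleftrightarrow> f x = (\<lambda>y. \<Sum>i\<in>I. c i * g i y) \<and> finite I \<and> I \<noteq> {}
      \<and> (\<forall>i\<in>I. 0 \<le> c i \<and> g i \<in> F x) \<and> sum c I = 1"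
    for x and I :: "nat set" and c :: "nat \<Rightarrow> real" and g :: "nat \<Rightarrow> 'a \<Rightarrow> real"
  have "\<forall>x\<in>X. \<exists>I c g. P x I c g"
    using f unfolding fconv_def P_def mem_Collect_eq .
  then obtain I c g where Pcg: "\<forall>x\<in>X. P x (I x) (c x) (g x)" by metis
  define K where "K = Sigma (supp u) I"
  show thesis
  proof
    show "splits u K fst (\<lambda>(x, i). u x * c x i)"
      unfolding splits_def
    proof (intro conjI ballI)
      show "finite K" using fu(1,2) Pcg by (auto simp: K_def P_def)
    next
      fix k assume "k \<in> K"
      then show "0 \<le> (case k of (x, i) \<Rightarrow> u x * c x i)" "fst k \<in> supp u"
        using fu(2,3) Pcg by (auto simp: K_def P_def)
    next
      fix x assume x: "x \<in> supp u"
      then have "{k \<in> K. fst k = x} = {x} \<times> I x" by (auto simp: K_def)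
      then show "(\<Sum>k\<in>{k \<in> K. fst k = x}. case k of (x, i) \<Rightarrow> u x * c x i) = u x"
        using x fu(2) Pcg by (auto simp: P_def sum.cartesian_product[symmetric]
            simp flip: sum_distrib_left)
    qed
    show "\<forall>k\<in>K. (case_prod g) k \<in> F (fst k)"
      using fu(2) Pcg by (auto simp: K_def P_def)
    have "(\<Sum>x\<in>supp u. u x * f x y) = (\<Sum>x\<in>supp u. \<Sum>i\<in>I x. u x * c x i * g x i y)" for y
      using fu(2) Pcg by (intro sum.cong) (auto simp: P_def sum_distrib_left mult.assoc)
    also have "\<dots> y = (\<Sum>(x, i)\<in>K. u x * c x i * g x i y)" for y
      unfolding K_def using fu(1,2) Pcg by (intro sum.Sigma) (auto simp: P_def)
    finally show "v = (\<lambda>y. \<Sum>k\<in>K. (case k of (x, i) \<Rightarrow> u x * c x i) * case_prod g k y)"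
      by (simp add: v_eq split_def)
  qed
qed

text \<open>Conversely, a mixture of elements of the values of F whose weights split u lies in
  the mixed extension at u: over each x \<in> supp u the normalised weights form a convex
  combination of elements of F x.\<close>
lemma mixed_ext_of_splits:
  assumes u: "u \<in> fsprob X" and nonempty: "\<forall>x\<in>X. F x \<noteq> {}"
    and spl: "splits u K loc w" and \<mu>: "\<forall>k\<in>K. \<mu> k \<in> F (loc k)"
  shows "(\<lambda>y. \<Sum>k\<in>K. w k * \<mu> k y) \<in> mixed_ext X F u"
proof -
  note fu = fsprob_facts[OF u]
  define f where "f x = (if x \<in> supp u then (\<lambda>y. \<Sum>k\<in>{k\<in>K. loc k = x}. w k / u x * \<mu> k y)
      else (SOME m. m \<in> F x))" for x
  have "f x \<in> fconv (F x)" if "x \<in> X" for x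
  proof (cases "x \<in> supp u")
    case True
    then have "(\<Sum>k\<in>{k\<in>K. loc k = x}. w k / u x) = 1"
      using spl fu(6)[OF True] by (simp add: splits_def flip: sum_divide_distrib)
    then show ?thesis
      using True spl \<mu> fu(6)[OF True] unfolding f_def if_P[OF True]
      by (intro fconv_comb) (auto simp: splits_def)
  next
    case False
    then show ?thesis
      using nonempty that by (simp add: f_def fconv_single some_in_eq)
  qed
  moreover have "(\<Sum>k\<in>K. w k * \<mu> k y) = (\<Sum>x\<in>supp u. u x * f x y)" for y
    unfolding splits_group[OF spl fu(1)]
    by (intro sum.cong) (auto simp: f_def sum_distrib_left supp_def)
  ultimately show ?thesis
    unfolding mixed_ext_def by auto
qed

definition transported_weights ::
  "('a \<Rightarrow> 'a \<Rightarrow> real) \<Rightarrow> ('a \<Rightarrow> real) \<Rightarrow> ('i \<Rightarrow> 'a) \<Rightarrow> ('i \<Rightarrow> real) \<Rightarrow> 'a \<times> 'i \<Rightarrow> real" where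
  "transported_weights \<pi> u1 loc w = (\<lambda>(x', k). \<pi> (loc k) x' * w k / u1 (loc k))"

lemma splits_transported:
  assumes u1: "u1 \<in> fsprob X" and u2: "u2 \<in> fsprob X" and \<pi>: "coupling u1 u2 \<pi>"
    and spl: "splits u1 K loc w"
  shows "splits u2 (supp u2 \<times> K) fst (transported_weights \<pi> u1 loc w)"
  unfolding splits_def
proof (intro conjI ballI)
  show "finite (supp u2 \<times> K)" using fsprob_facts(1)[OF u2] spl by (simp add: splits_def)
next
  fix q assume "q \<in> supp u2 \<times> K"
  then show "0 \<le> transported_weights \<pi> u1 loc w q" "fst q \<in> supp u2"
    using \<pi> spl fsprob_facts(3)[OF u1]
    by (auto simp: transported_weights_def coupling_def splits_def)
next
  fix x' assume x': "x' \<in> supp u2"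
  have "{q \<in> supp u2 \<times> K. fst q = x'} = {x'} \<times> K" using x' by auto
  then have "(\<Sum>q\<in>{q \<in> supp u2 \<times> K. fst q = x'}. transported_weights \<pi> u1 loc w q)
      = (\<Sum>k\<in>K. w k * (\<pi> (loc k) x' / u1 (loc k)))"
    by (simp add: transported_weights_def sum.cartesian_product[symmetric] mult.commute)
  also have "\<dots> = (\<Sum>x\<in>supp u1. u1 x * (\<pi> x x' / u1 x))"
    by (rule splits_sum[OF spl fsprob_facts(1)[OF u1]])
  also have "\<dots> = (\<Sum>x\<in>supp u1. \<pi> x x')"
    by (intro sum.cong) (auto simp: supp_def)
  also have "\<dots> = u2 x'"
    using \<pi> x' by (simp add: coupling_def)
  finally show "(\<Sum>q\<in>{q \<in> supp u2 \<times> K. fst q = x'}. transported_weights \<pi> u1 loc w q) = u2 x'" .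
qed

lemma sum_transported_weights:
  assumes \<pi>: "coupling u1 u2 \<pi>" and spl: "splits u1 K loc w"
  shows "(\<Sum>q\<in>supp u2 \<times> K. transported_weights \<pi> u1 loc w q * G (snd q)) = (\<Sum>k\<in>K. w k * G k)"
proof -
  have "(\<Sum>x'\<in>supp u2. transported_weights \<pi> u1 loc w (x', k) * G k) = w k * G k" if "k \<in> K" for k
  proof -
    have "loc k \<in> supp u1" using spl that by (simp add: splits_def)
    then have "(\<Sum>x'\<in>supp u2. \<pi> (loc k) x') = u1 (loc k)" "u1 (loc k) \<noteq> 0"
      using \<pi> by (auto simp: coupling_def supp_def)
    then show ?thesis
      by (simp add: transported_weights_def flip: sum_distrib_right sum_divide_distrib)
  qed
  then have "(\<Sum>k\<in>K. \<Sum>x'\<in>supp u2. transported_weights \<pi> u1 loc w (x', k) * G k)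
      = (\<Sum>k\<in>K. w k * G k)"
    by (rule sum.cong[OF refl])
  moreover have "(\<Sum>q\<in>supp u2 \<times> K. transported_weights \<pi> u1 loc w q * G (snd q))
      = (\<Sum>x'\<in>supp u2. \<Sum>k\<in>K. transported_weights \<pi> u1 loc w (x', k) * G k)"
    unfolding sum.cartesian_product by (simp add: split_def)
  ultimately show ?thesis
    by (simp add: sum.swap[of _ K])
qed

lemma transported_weights_cost:
  assumes fin: "finite (supp u1)" and spl: "splits u1 K loc w"
  shows "(\<Sum>q\<in>supp u2 \<times> K. transported_weights \<pi> u1 loc w q * dist (loc (snd q)) (fst q))
    = transport_cost u1 u2 \<pi>"
proof -
  define C where "C x = (\<Sum>x'\<in>supp u2. \<pi> x x' * dist x x') / u1 x" for x
  have "(\<Sum>q\<in>supp u2 \<times> K. transported_weights \<pi> u1 loc w q * dist (loc (snd q)) (fst q))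
      = (\<Sum>x'\<in>supp u2. \<Sum>k\<in>K. transported_weights \<pi> u1 loc w (x', k) * dist (loc k) x')"
    unfolding sum.cartesian_product by (simp add: split_def)
  also have "\<dots> = (\<Sum>k\<in>K. w k * C (loc k))"
    by (subst sum.swap) (simp add: C_def transported_weights_def sum_divide_distrib
        sum_distrib_left mult_ac)
  also have "\<dots> = (\<Sum>x\<in>supp u1. \<Sum>x'\<in>supp u2. \<pi> x x' * dist x x')"
    unfolding splits_sum[OF spl fin] by (intro sum.cong) (auto simp: C_def supp_def)
  finally show ?thesis by (simp add: transport_cost_def)
qed


lemma nonexpansive_choice:
  assumes nonexp: "\<forall>x\<in>X. \<forall>x'\<in>X. \<forall>u\<in>F x. \<exists>u'\<in>F x'. dKR X u u' \<le> dist x x'"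
    and "\<forall>q\<in>Q. a q \<in> X \<and> b q \<in> X \<and> m q \<in> F (a q)"
  obtains m' where "\<forall>q\<in>Q. m' q \<in> F (b q) \<and> dKR X (m q) (m' q) \<le> dist (a q) (b q)"
proof -
  have "\<forall>q\<in>Q. \<exists>u'. u' \<in> F (b q) \<and> dKR X (m q) u' \<le> dist (a q) (b q)"
    using assms by blast
  then obtain m' where "\<forall>q\<in>Q. m' q \<in> F (b q) \<and> dKR X (m q) (m' q) \<le> dist (a q) (b q)"
    by (rule bchoice[elim_format]) blast
  then show ?thesis by (rule that)
qed

lemma mixed_ext_transport:
  fixes X :: "'a::metric_space set"
  assumes X: "compact X" and F: "\<forall>x\<in>X. F x \<subseteq> fsprob X \<and> F x \<noteq> {}"
    and nonexp: "\<forall>x\<in>X. \<forall>x'\<in>X. \<forall>u\<in>F x. \<exists>u'\<in>F x'. dKR X u u' \<le> dist x x'"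
    and u1: "u1 \<in> fsprob X" and u2: "u2 \<in> fsprob X" and \<pi>: "coupling u1 u2 \<pi>"
    and spl: "splits u1 K loc w" and \<mu>: "\<forall>k\<in>K. \<mu> k \<in> F (loc k)"
  shows "\<exists>v2\<in>mixed_ext X F u2. dKR X (\<lambda>y. \<Sum>k\<in>K. w k * \<mu> k y) v2 \<le> transport_cost u1 u2 \<pi>"
proof -
  let ?K' = "supp u2 \<times> K" and ?w' = "transported_weights \<pi> u1 loc w"
  have spl': "splits u2 ?K' fst ?w'"
    by (rule splits_transported[OF u1 u2 \<pi> spl])
  have in_X: "fst q \<in> X" "loc (snd q) \<in> X" if "q \<in> ?K'" for q
    using that spl fsprob_facts(2)[OF u1] fsprob_facts(2)[OF u2] by (auto simp: splits_def)
  obtain \<mu>' where \<mu>': "\<forall>q\<in>?K'. \<mu>' q \<in> F (fst q)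
      \<and> dKR X (\<mu> (snd q)) (\<mu>' q) \<le> dist (loc (snd q)) (fst q)"
    by (rule nonexpansive_choice[OF nonexp, of ?K' "\<lambda>q. loc (snd q)" fst "\<lambda>q. \<mu> (snd q)"])
      (use in_X \<mu> in auto)
  have comps: "0 \<le> ?w' q \<and> \<mu> (snd q) \<in> fsprob X \<and> \<mu>' q \<in> fsprob X" if q: "q \<in> ?K'" for q
  proof -
    have "snd q \<in> K" using q by auto
    then have "\<mu> (snd q) \<in> fsprob X" using \<mu> F in_X(2)[OF q] by blast
    moreover have "\<mu>' q \<in> fsprob X" using \<mu>' F in_X(1)[OF q] q by blast
    moreover have "0 \<le> ?w' q" using spl' q unfolding splits_def by blast
    ultimately show ?thesis by blast
  qed
  have v2: "(\<lambda>y. \<Sum>q\<in>?K'. ?w' q * \<mu>' q y) \<in> mixed_ext X F u2"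
    by (rule mixed_ext_of_splits[OF u2 _ spl']) (use F \<mu>' in auto)
  have lifted: "(\<lambda>y. \<Sum>k\<in>K. w k * \<mu> k y) = (\<lambda>y. \<Sum>q\<in>?K'. ?w' q * \<mu> (snd q) y)"
    using sum_transported_weights[OF \<pi> spl, of "\<lambda>k. \<mu> k _"] by simp
  have "dKR X (\<lambda>y. \<Sum>q\<in>?K'. ?w' q * \<mu> (snd q) y) (\<lambda>y. \<Sum>q\<in>?K'. ?w' q * \<mu>' q y)
      \<le> (\<Sum>q\<in>?K'. ?w' q * dKR X (\<mu> (snd q)) (\<mu>' q))"
    using dKR_mixture_le[OF X, of ?K' ?w' "\<lambda>q. \<mu> (snd q)" \<mu>'] spl' comps
    by (simp add: splits_def)
  also have "\<dots> \<le> (\<Sum>q\<in>?K'. ?w' q * dist (loc (snd q)) (fst q))"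
    using \<mu>' comps by (intro sum_mono mult_left_mono) blast+
  also have "\<dots> = transport_cost u1 u2 \<pi>"
    by (rule transported_weights_cost[OF fsprob_facts(1)[OF u1] spl])
  finally show ?thesis
    unfolding lifted using v2 by blast
qed

theorem mainTheorem13:
  fixes X :: "'a::metric_space set"
    and F :: "'a \<Rightarrow> ('a \<Rightarrow> real) set"
  assumes "compact X"
    and "\<forall>x\<in>X. F x \<subseteq> fsprob X \<and> F x \<noteq> {}"
    and "\<forall>x\<in>X. \<forall>x'\<in>X. \<forall>u\<in>F x. \<exists>u'\<in>F x'. dKR X u u' \<le> dist x x'"
  shows "\<forall>u1\<in>fsprob X. \<forall>u2\<in>fsprob X. \<forall>v1\<in>mixed_ext X F u1.
           \<exists>v2\<in>mixed_ext X F u2. dKR X v1 v2 \<le> dKR X u1 u2"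
proof (intro ballI)
  fix u1 u2 v1 assume u1: "u1 \<in> fsprob X" and u2: "u2 \<in> fsprob X"
    and v1: "v1 \<in> mixed_ext X F u1"
  obtain K :: "('a \<times> nat) set" and w \<mu> where spl: "splits u1 K fst w"
    and \<mu>: "\<forall>k\<in>K. \<mu> k \<in> F (fst k)" and v1_eq: "v1 = (\<lambda>y. \<Sum>k\<in>K. w k * \<mu> k y)"
    by (rule mixed_ext_splits[OF u1 v1])
  obtain \<pi> where \<pi>: "coupling u1 u2 \<pi>" and cost: "transport_cost u1 u2 \<pi> \<le> dKR X u1 u2"
    using optimal_coupling[OF assms(1) u1 u2] by blast
  obtain v2 where "v2 \<in> mixed_ext X F u2" and "dKR X v1 v2 \<le> transport_cost u1 u2 \<pi>"
    using mixed_ext_transport[OF assms u1 u2 \<pi> spl \<mu>] unfolding v1_eq by blast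
  with cost show "\<exists>v2\<in>mixed_ext X F u2. dKR X v1 v2 \<le> dKR X u1 u2"
    by force
qed

end
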